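(* Let $\delta>0$ and $E\in\mathcal T_\delta$. Then there are constants $0<C_1<C_2$ such that for all $0<\epsilon<\delta$, $$\frac{C_1}{|m^+(E+i\epsilon)|}<\frac{\|\boldsymbol u_1\|_{L_\epsilon}}{\|\boldsymbol u_2\|_{L_\epsilon}}<\frac{C_2}{|m^+(E+i\epsilon)|}.$$
   Context: $J=\begin{pmatrix}1&0\\0&0\end{pmatrix}$, $V:\mathbb Z\to M(2,\mathbb C)$ bounded with self-adjoint values $V(n)=(V_{ij}(n))$, and $(\mathcal S\boldsymbol u)(n)=J\boldsymbol u(n+1)+J\boldsymbol u(n-1)+V(n)\boldsymbol u(n)$ on $\ell^2(\mathbb Z,\mathbb C^2)$; write $\boldsymbol u(n)=(a(n),b(n))^{\mathsf T}$. $\mathcal T_\delta=\{x\in\mathbb R:\operatorname{dist}(x,\{V_{22}(n):n\in\mathbb Z\})\ge\delta\}$. For $\operatorname{Im}z>0$ let $\boldsymbol u_z^+$ be the (unique up to scaling) nonzero solution of $\mathcal S\boldsymbol u=z\boldsymbol u$ with $\sum_{n\ge0}\|\boldsymbol u_z^+(n)\|^2<\infty$ and put $m^+(z)=-a_z^+(1)/a_z^+(0)$. For $E\in\mathcal T_\delta$, let $\boldsymbol u_1,\boldsymbol u_2$ be the solutions of $\mathcal S\boldsymbol u=E\boldsymbol u$ with $a_1(1)=1,a_1(0)=0$, $a_2(1)=0,a_2(0)=1$ (for such $E$ every solution satisfies $b(n)=\frac{V_{21}(n)}{E-V_{22}(n)}a(n)$). For $L>1$, $\|\boldsymbol u\|_L=\big(\sum_{n=1}^{\lfloor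 L\rfloor}\|\boldsymbol u(n)\|^2+(L-\lfloor L\rfloor)\|\boldsymbol u(\lfloor L\rfloor+1)\|^2\big)^{1/2}$, and for $\epsilon>0$, $L_\epsilon\in(1,\infty)$ is the unique $L$ with $\|\boldsymbol u_1\|_L\|\boldsymbol u_2\|_L=\frac1{4\epsilon}$. *)

theory Defs
  imports "HOL-Analysis.Analysis"
begin

text \<open>Vectors in C^2 are complex^2 (component 1 = a, component 2 = b);
  2x2 matrices are complex^2^2, entry V n $ i $ j = V_ij(n).\<close>

definition Jmat :: "complex^2^2" where
  "Jmat = (\<chi> i j. if i = 1 \<and> j = 1 then 1 else 0)"

definition self_adjoint_mat :: "complex^2^2 \<Rightarrow> bool" where
  "self_adjoint_mat M \<longleftrightarrow> (\<forall>i j. M $ i $ j = cnj (M $ j $ i))"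

definition Sop :: "(int \<Rightarrow> complex^2^2) \<Rightarrow> (int \<Rightarrow> complex^2) \<Rightarrow> int \<Rightarrow> complex^2" where
  "Sop V u n = Jmat *v u (n + 1) + Jmat *v u (n - 1) + V n *v u n"

definition solves :: "(int \<Rightarrow> complex^2^2) \<Rightarrow> complex \<Rightarrow> (int \<Rightarrow> complex^2) \<Rightarrow> bool" where
  "solves V z u \<longleftrightarrow> (\<forall>n. Sop V u n = z *s u n)"

definition Tdelta :: "(int \<Rightarrow> complex^2^2) \<Rightarrow> real \<Rightarrow> real set" where
  "Tdelta V \<delta> = {x. infdist (complex_of_real x) (range (\<lambda>n. V n $ 2 $ 2)) \<ge> \<delta>}"

definition uplus :: "(int \<Rightarrow> complex^2^2) \<Rightarrow> complex \<Rightarrow> (int \<Rightarrow> complex^2)" where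
  "uplus V z = (SOME u. solves V z u \<and> u \<noteq> (\<lambda>_. 0) \<and>
                        summable (\<lambda>k::nat. (norm (u (int k)))\<^sup>2))"

definition mplus :: "(int \<Rightarrow> complex^2^2) \<Rightarrow> complex \<Rightarrow> complex" where
  "mplus V z = - (uplus V z 1 $ 1) / (uplus V z 0 $ 1)"

definition u1 :: "(int \<Rightarrow> complex^2^2) \<Rightarrow> real \<Rightarrow> (int \<Rightarrow> complex^2)" where
  "u1 V E = (SOME u. solves V (complex_of_real E) u \<and> u 1 $ 1 = 1 \<and> u 0 $ 1 = 0)"

definition u2 :: "(int \<Rightarrow> complex^2^2) \<Rightarrow> real \<Rightarrow> (int \<Rightarrow> complex^2)" where
  "u2 V E = (SOME u. solves V (complex_of_real E) u \<and> u 1 $ 1 = 0 \<and> u 0 $ 1 = 1)"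

definition normL :: "(int \<Rightarrow> complex^2) \<Rightarrow> real \<Rightarrow> real" where
  "normL u L = sqrt ((\<Sum>n = 1..nat \<lfloor>L\<rfloor>. (norm (u (int n)))\<^sup>2)
                     + (L - of_int \<lfloor>L\<rfloor>) * (norm (u (\<lfloor>L\<rfloor> + 1)))\<^sup>2)"

definition Leps :: "(int \<Rightarrow> complex^2^2) \<Rightarrow> real \<Rightarrow> real \<Rightarrow> real" where
  "Leps V E \<epsilon> = (THE L. L > 1 \<and> normL (u1 V E) L * normL (u2 V E) L = 1 / (4 * \<epsilon>))"

end

theory Submission
  imports Defs
begin

(*
  Let m = m+(E + i eps), let phi be the Weyl solution at E + i eps normalised by a(0) = 1,
  a(1) = -m, and let psi = u2 - m u1 be the solution at energy E with the same initial data.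
  Away from the values V22(n) the lower component of a solution is determined by the upper
  one, so S u = z u becomes a scalar three-term recurrence whose coefficients move by
  O(eps) when E is replaced by E + i eps.

  Green's identity bounds phi on the half-line: eps ||phi||^2 <= Im m <= |m|. Variation of
  constants expresses phi - psi through the shift of the coefficients, and Cauchy-Schwarz
  gives ||psi||_L <= 2 ||phi|| + 4 eps ||u1||_L ||u2||_L ||phi||. At L = L_eps the factor
  4 eps ||u1||_L ||u2||_L is 1, so ||psi||_L <= 3 sqrt (|m| / eps) = 6 sqrt (|m| ||u1||_L ||u2||_L).
  By the triangle inequality this bounds | ||u2||_L - |m| ||u1||_L |, which forces
  ||u1||_L / ||u2||_L to lie within a factor 64 of 1 / |m|.
*)

lemma vec2_eq_iff: "(x::'a^2) = y \<longleftrightarrow> x$1 = y$1 \<and> x$2 = y$2"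
  by (simp add: vec_eq_iff forall_2)

lemma matrix_vector_mult_2:
  fixes M :: "'a::semiring_1^2^2"
  shows "(M *v x)$1 = M$1$1 * x$1 + M$1$2 * x$2"
    and "(M *v x)$2 = M$2$1 * x$1 + M$2$2 * x$2"
  by (simp_all add: matrix_vector_mult_def sum_2)

lemma norm_vec2_sq: "(norm (x::complex^2))\<^sup>2 = (cmod (x$1))\<^sup>2 + (cmod (x$2))\<^sup>2"
  by (simp add: norm_vec_def L2_set_def sum_2)

lemma norm_vector_scalar_mult: "norm (c *s (x::'a::real_normed_field^'n)) = norm c * norm x"
  unfolding norm_vec_def by (simp add: norm_mult L2_set_right_distrib)

lemma L2_set_mono_subset: "finite B \<Longrightarrow> A \<subseteq> B \<Longrightarrow> L2_set f A \<le> L2_set f B"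
  unfolding L2_set_def by (intro real_sqrt_le_mono sum_mono2) auto

lemma L2_set_le_sqrt: "(\<Sum>i\<in>A. (f i)\<^sup>2) \<le> c \<Longrightarrow> L2_set f A \<le> sqrt c"
  unfolding L2_set_def by (rule real_sqrt_le_mono)

lemma ratio_bounds_of_balance_defect:
  fixes A B x :: real
  assumes "0 < A" "0 < B" "0 \<le> x" and defect: "\<bar>B - x * A\<bar> \<le> 6 * sqrt (x * A * B)"
  shows "0 < x \<and> (1/64) / x < A / B \<and> A / B < 64 / x"
proof -
  define y where "y = x * A"
  define s where "s = sqrt (y * B)"
  have y0: "0 \<le> y" unfolding y_def using assms by simp
  have s_sq: "s\<^sup>2 = y * B" unfolding s_def using y0 assms by simp
  have s_bound: "\<bar>B - y\<bar> \<le> 6 * s" using defect unfolding y_def s_def by (simp add: mult.assoc)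
  have upper: "y < 64 * B"
  proof (rule ccontr)
    assume "\<not> y < 64 * B"
    then have "y * B \<le> y * (y / 64)" using y0 by (intro mult_left_mono) auto
    then have "s\<^sup>2 \<le> (y / 8)\<^sup>2" unfolding s_sq by (simp add: power2_eq_square)
    then have "s \<le> y / 8" by (rule power2_le_imp_le) (use y0 in simp)
    then show False using s_bound \<open>\<not> y < 64 * B\<close> \<open>0 < B\<close> by linarith
  qed
  have lower: "B / 64 < y"
  proof (rule ccontr)
    assume "\<not> B / 64 < y"
    then have "y * B \<le> (B / 64) * B" using \<open>0 < B\<close> by (intro mult_right_mono) auto
    then have "s\<^sup>2 \<le> (B / 8)\<^sup>2" unfolding s_sq by (simp add: power2_eq_square)
    then have "s \<le> B / 8" by (rule power2_le_imp_le) (use \<open>0 < B\<close> in simp)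
    then show False using s_bound \<open>\<not> B / 64 < y\<close> \<open>0 < B\<close> by linarith
  qed
  have "x \<noteq> 0" using lower \<open>0 < B\<close> unfolding y_def by auto
  then have "0 < x" using \<open>0 \<le> x\<close> by simp
  then show ?thesis using upper lower assms unfolding y_def by (simp add: field_simps)
qed

section \<open>Three-term recurrences\<close>

fun recurrence_seq :: "(nat \<Rightarrow> 'a::ring) \<Rightarrow> 'a \<Rightarrow> 'a \<Rightarrow> nat \<Rightarrow> 'a" where
  "recurrence_seq c x0 x1 0 = x0"
| "recurrence_seq c x0 x1 (Suc 0) = x1"
| "recurrence_seq c x0 x1 (Suc (Suc k)) =
     c k * recurrence_seq c x0 x1 (Suc k) - recurrence_seq c x0 x1 k"

lemma two_sided_recurrence_exists:
  fixes c :: "int \<Rightarrow> 'a::ring"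
  shows "\<exists>x. x 0 = x0 \<and> x 1 = x1 \<and> (\<forall>n. x (n + 1) = c n * x n - x (n - 1))"
proof -
  define fwd where "fwd = recurrence_seq (\<lambda>k. c (int k + 1)) x0 x1"
  (* k \<mapsto> x (1 - k) satisfies the forward recurrence with coefficients c (- k). *)
  define bwd where "bwd = recurrence_seq (\<lambda>k. c (- int k)) x1 x0"
  define x where "x n = (if 0 \<le> n then fwd (nat n) else bwd (nat (1 - n)))" for n
  have x_fwd: "x (int k) = fwd k" for k
    unfolding x_def by simp
  have x_bwd: "x (1 - int k) = bwd k" for k
  proof (cases "k \<le> 1")
    case True
    then consider "k = 0" | "k = 1" by linarith
    then show ?thesis by cases (simp_all add: x_def fwd_def bwd_def)
  qed (simp add: x_def)
  have "x (n + 1) = c n * x n - x (n - 1)" for n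
  proof (cases "1 \<le> n")
    case True
    define k where "k = nat (n - 1)"
    have k: "n = int k + 1" using True unfolding k_def by simp
    show ?thesis
      using x_fwd[of "Suc (Suc k)"] x_fwd[of "Suc k"] x_fwd[of k]
      by (simp add: k fwd_def add.commute)
  next
    case False
    define k where "k = nat (- n)"
    have k: "n = - int k" using False unfolding k_def by simp
    have idx: "1 - int (Suc (Suc k)) = n - 1" "1 - int (Suc k) = n" "1 - int k = n + 1"
      using k by simp_all
    have "x (n - 1) = bwd (Suc (Suc k))" "x n = bwd (Suc k)" "x (n + 1) = bwd k"
      using x_bwd[of "Suc (Suc k)"] x_bwd[of "Suc k"] x_bwd[of k] unfolding idx .
    moreover have "bwd (Suc (Suc k)) = c n * bwd (Suc k) - bwd k"
      by (simp add: bwd_def k)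
    ultimately show ?thesis by (simp add: algebra_simps)
  qed
  moreover have "x 0 = x0" "x 1 = x1"
    using x_fwd[of 0] x_fwd[of 1] by (simp_all add: fwd_def)
  ultimately show ?thesis by blast
qed

lemma two_sided_recurrence_zero:
  fixes x :: "int \<Rightarrow> 'a::ring"
  assumes "x 0 = 0" "x 1 = 0" and rec: "\<And>n. x (n + 1) = c n * x n - x (n - 1)"
  shows "x n = 0"
proof -
  have "x n = 0 \<and> x (n + 1) = 0"
  proof (induction n rule: int_induct[where k = 0])
    case base
    then show ?case using assms by simp
  next
    case (step1 i)
    then show ?case using rec[of "i + 1"] by simp
  next
    case (step2 i)
    then show ?case using rec[of i] by (simp add: algebra_simps)
  qed
  then show ?thesis ..
qed

lemma wronskian_L2_lower_bound:
  fixes \<alpha> \<beta> :: "nat \<Rightarrow> complex" and X Y :: "nat \<Rightarrow> real"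
  assumes wronskian: "\<And>n. \<alpha> (Suc n) * \<beta> n - \<alpha> n * \<beta> (Suc n) = 1"
    and X: "\<And>n. cmod (\<alpha> n) \<le> X n" and Y: "\<And>n. cmod (\<beta> n) \<le> Y n" and "1 \<le> M"
  shows "real M - 1 \<le> 2 * (L2_set X {1..M} * L2_set Y {1..M})"
proof -
  have X0: "0 \<le> X n" and Y0: "0 \<le> Y n" for n
    using X[of n] Y[of n] norm_ge_zero order_trans by blast+
  have one_le: "1 \<le> X (Suc n) * Y n + X n * Y (Suc n)" for n
  proof -
    have "1 = cmod (\<alpha> (Suc n) * \<beta> n - \<alpha> n * \<beta> (Suc n))" using wronskian[of n] by simp
    also have "\<dots> \<le> cmod (\<alpha> (Suc n)) * cmod (\<beta> n) + cmod (\<alpha> n) * cmod (\<beta> (Suc n))"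
      by (metis norm_mult norm_triangle_ineq4)
    also have "\<dots> \<le> X (Suc n) * Y n + X n * Y (Suc n)"
      by (intro add_mono mult_mono X Y X0) auto
    finally show ?thesis .
  qed
  have shift: "L2_set (\<lambda>n. f (Suc n)) {1..M-1} \<le> L2_set f {1..M}" for f :: "nat \<Rightarrow> real"
  proof -
    have "L2_set (\<lambda>n. f (Suc n)) {1..M-1} = L2_set f {Suc 1..Suc (M-1)}"
      unfolding L2_set_def by (simp only: sum.shift_bounds_cl_Suc_ivl)
    also have "\<dots> \<le> L2_set f {1..M}"
      by (rule L2_set_mono_subset) auto
    finally show ?thesis .
  qed
  have drop_last: "L2_set f {1..M-1} \<le> L2_set f {1..M}" for f :: "nat \<Rightarrow> real"
    by (rule L2_set_mono_subset) auto
  have "real M - 1 = (\<Sum>n\<in>{1..M-1}. 1)" using \<open>1 \<le> M\<close> by simp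
  also have "\<dots> \<le> (\<Sum>n\<in>{1..M-1}. X (Suc n) * Y n + X n * Y (Suc n))"
    by (rule sum_mono) (rule one_le)
  also have "\<dots> = (\<Sum>n\<in>{1..M-1}. \<bar>X (Suc n)\<bar> * \<bar>Y n\<bar>) + (\<Sum>n\<in>{1..M-1}. \<bar>X n\<bar> * \<bar>Y (Suc n)\<bar>)"
    by (simp add: sum.distrib X0 Y0)
  also have "\<dots> \<le> L2_set (\<lambda>n. X (Suc n)) {1..M-1} * L2_set Y {1..M-1}
      + L2_set X {1..M-1} * L2_set (\<lambda>n. Y (Suc n)) {1..M-1}"
    by (intro add_mono L2_set_mult_ineq)
  also have "\<dots> \<le> L2_set X {1..M} * L2_set Y {1..M} + L2_set X {1..M} * L2_set Y {1..M}"
    by (intro add_mono mult_mono shift drop_last L2_set_nonneg)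
  finally show ?thesis by simp
qed

lemma variation_of_constants:
  fixes \<alpha> \<beta> \<phi> f T :: "nat \<Rightarrow> 'a::comm_ring_1"
  assumes wronskian: "\<And>k. \<alpha> (Suc k) * \<beta> k - \<alpha> k * \<beta> (Suc k) = 1"
    and rec_\<alpha>: "\<And>k. \<alpha> (Suc (Suc k)) = T k * \<alpha> (Suc k) - \<alpha> k"
    and rec_\<beta>: "\<And>k. \<beta> (Suc (Suc k)) = T k * \<beta> (Suc k) - \<beta> k"
    and rec: "\<And>k. \<phi> (Suc (Suc k)) = T k * \<phi> (Suc k) - \<phi> k + f (Suc k)"
    and init: "\<phi> 0 = 1" "\<phi> 1 = - m" "\<alpha> 0 = 0" "\<alpha> 1 = 1" "\<beta> 0 = 1" "\<beta> 1 = 0"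
  shows "\<phi> (Suc k) - (\<beta> (Suc k) - m * \<alpha> (Suc k))
       = \<alpha> (Suc k) * (\<Sum>j=1..k. \<beta> j * f j) - \<beta> (Suc k) * (\<Sum>j=1..k. \<alpha> j * f j)"
proof -
  define C1 where "C1 k = \<phi> (Suc k) * \<beta> k - \<phi> k * \<beta> (Suc k)" for k
  define C2 where "C2 k = \<phi> k * \<alpha> (Suc k) - \<phi> (Suc k) * \<alpha> k" for k
  have C1: "C1 k = - m + (\<Sum>j=1..k. \<beta> j * f j)" for k
  proof (induction k)
    case (Suc k)
    have "C1 (Suc k) = C1 k + \<beta> (Suc k) * f (Suc k)"
      unfolding C1_def rec rec_\<beta> by (simp add: algebra_simps)
    then show ?case using Suc by simp
  qed (simp add: C1_def init[unfolded One_nat_def])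
  have C2: "C2 k = 1 - (\<Sum>j=1..k. \<alpha> j * f j)" for k
  proof (induction k)
    case (Suc k)
    have "C2 (Suc k) = C2 k - \<alpha> (Suc k) * f (Suc k)"
      unfolding C2_def rec rec_\<alpha> by (simp add: algebra_simps)
    then show ?case using Suc by simp
  qed (simp add: C2_def init[unfolded One_nat_def])
  have "C2 k * \<beta> (Suc k) + C1 k * \<alpha> (Suc k)
      = \<phi> (Suc k) * (\<alpha> (Suc k) * \<beta> k - \<alpha> k * \<beta> (Suc k))"
    unfolding C1_def C2_def by (simp add: algebra_simps)
  then have "\<phi> (Suc k) = C2 k * \<beta> (Suc k) + C1 k * \<alpha> (Suc k)"
    using wronskian[of k] by simp
  then show ?thesis unfolding C1 C2 by (simp add: algebra_simps)
qed

section \<open>Truncated norms\<close>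

definition trunc_weight :: "real \<Rightarrow> nat \<Rightarrow> real" where
  "trunc_weight L n = max 0 (min 1 (L + 1 - real n))"

lemma trunc_weight_nonneg: "0 \<le> trunc_weight L n"
  and trunc_weight_le_1: "trunc_weight L n \<le> 1"
  and trunc_weight_mono: "L \<le> L' \<Longrightarrow> trunc_weight L n \<le> trunc_weight L' n"
  by (simp_all add: trunc_weight_def)

lemma normL_eq_weighted_sum:
  assumes "1 \<le> L" "nat \<lfloor>L\<rfloor> + 1 \<le> M"
  shows "normL u L = sqrt (\<Sum>n=1..M. trunc_weight L n * (norm (u (int n)))\<^sup>2)"
proof -
  define K where "K = nat \<lfloor>L\<rfloor>"
  have K: "\<lfloor>L\<rfloor> = int K" "real K \<le> L" "L < real K + 1"
    using assms(1) unfolding K_def by linarith+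
  have "(\<Sum>n=1..M. trunc_weight L n * (norm (u (int n)))\<^sup>2)
      = (\<Sum>n=1..Suc K. trunc_weight L n * (norm (u (int n)))\<^sup>2)"
  proof (rule sum.mono_neutral_right)
    show "finite {1..M}" by simp
    show "{1..Suc K} \<subseteq> {1..M}" using assms(2) unfolding K_def by simp
    show "\<forall>n\<in>{1..M} - {1..Suc K}. trunc_weight L n * (norm (u (int n)))\<^sup>2 = 0"
      using K(3) by (auto simp: trunc_weight_def)
  qed
  also have "\<dots> = (\<Sum>n=1..K. trunc_weight L n * (norm (u (int n)))\<^sup>2)
      + trunc_weight L (Suc K) * (norm (u (int (Suc K))))\<^sup>2"
    by simp
  also have "\<dots> = (\<Sum>n=1..K. (norm (u (int n)))\<^sup>2) + (L - real K) * (norm (u (int K + 1)))\<^sup>2"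
    using K(2,3) by (simp add: trunc_weight_def add.commute)
  finally show ?thesis
    unfolding normL_def K(1) by simp
qed

lemma normL_nonneg: "0 \<le> normL u L"
  unfolding normL_def by (simp add: sum_nonneg)

lemma normL_of_nat: "1 \<le> M \<Longrightarrow> normL u (real M) = L2_set (\<lambda>n. norm (u (int n))) {1..M}"
  unfolding normL_def L2_set_def by simp

lemma normL_mono:
  assumes "1 \<le> L" "L \<le> L'"
  shows "normL u L \<le> normL u L'"
proof -
  define M where "M = nat \<lfloor>L'\<rfloor> + 1"
  have "nat \<lfloor>L\<rfloor> + 1 \<le> M" "nat \<lfloor>L'\<rfloor> + 1 \<le> M"
    using assms floor_mono[OF assms(2)] unfolding M_def by auto
  then show ?thesis
    using assms
    by (simp add: normL_eq_weighted_sum sum_mono mult_right_mono trunc_weight_mono)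
qed

lemma normL_strict_mono:
  assumes "1 \<le> L" "L < L'" "u (\<lfloor>L\<rfloor> + 1) \<noteq> 0"
  shows "normL u L < normL u L'"
proof -
  define M where "M = nat \<lfloor>L'\<rfloor> + 1"
  define K where "K = nat \<lfloor>L\<rfloor>"
  have K: "\<lfloor>L\<rfloor> = int K" "real K \<le> L" "L < real K + 1"
    using assms(1) unfolding K_def by linarith+
  have M: "Suc K \<le> M" "nat \<lfloor>L'\<rfloor> + 1 \<le> M"
    using assms(2) floor_mono[of L L'] unfolding M_def K_def by auto
  have "(\<Sum>n=1..M. trunc_weight L n * (norm (u (int n)))\<^sup>2)
      < (\<Sum>n=1..M. trunc_weight L' n * (norm (u (int n)))\<^sup>2)"
  proof (rule sum_strict_mono_ex1)
    show "\<forall>n\<in>{1..M}. trunc_weight L n * (norm (u (int n)))\<^sup>2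
        \<le> trunc_weight L' n * (norm (u (int n)))\<^sup>2"
      using assms(2) by (auto intro!: mult_right_mono trunc_weight_mono)
    have "trunc_weight L (Suc K) < trunc_weight L' (Suc K)"
      using K(2,3) assms(2) by (simp add: trunc_weight_def)
    then show "\<exists>n\<in>{1..M}. trunc_weight L n * (norm (u (int n)))\<^sup>2
        < trunc_weight L' n * (norm (u (int n)))\<^sup>2"
      using M(1) assms(3) K(1) by (intro bexI[of _ "Suc K"]) (auto simp: add.commute)
  qed simp
  then show ?thesis
    using assms M K unfolding K_def by (simp add: normL_eq_weighted_sum)
qed

lemma continuous_on_normL: "continuous_on {1..real M} (normL u)"
proof -
  have "continuous_on {1..real M}
      (\<lambda>L. sqrt (\<Sum>n=1..M+1. trunc_weight L n * (norm (u (int n)))\<^sup>2))"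
    unfolding trunc_weight_def by (intro continuous_intros)
  then show ?thesis
  proof (rule continuous_on_eq)
    fix L assume "L \<in> {1..real M}"
    then have "1 \<le> L" "nat \<lfloor>L\<rfloor> + 1 \<le> M + 1"
      by (simp_all add: nat_le_iff floor_le_iff)
    then show "sqrt (\<Sum>n=1..M+1. trunc_weight L n * (norm (u (int n)))\<^sup>2) = normL u L"
      by (rule normL_eq_weighted_sum[symmetric])
  qed
qed

definition trunc_norm :: "real \<Rightarrow> (nat \<Rightarrow> real) \<Rightarrow> real" where
  "trunc_norm L f = L2_set (\<lambda>n. sqrt (trunc_weight L n) * f n) {1..nat \<lfloor>L\<rfloor> + 1}"

lemma normL_eq_trunc_norm: "1 \<le> L \<Longrightarrow> normL u L = trunc_norm L (\<lambda>n. norm (u (int n)))"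
  unfolding trunc_norm_def L2_set_def normL_eq_weighted_sum[OF _ order_refl]
  by (simp add: power_mult_distrib trunc_weight_nonneg)

lemma trunc_norm_mono:
  assumes "\<And>n. 0 \<le> f n" "\<And>n. 1 \<le> n \<Longrightarrow> n \<le> nat \<lfloor>L\<rfloor> + 1 \<Longrightarrow> f n \<le> g n"
  shows "trunc_norm L f \<le> trunc_norm L g"
  unfolding trunc_norm_def
  by (rule L2_set_mono) (simp_all add: mult_left_mono assms trunc_weight_nonneg)

lemma trunc_norm_add_le: "trunc_norm L (\<lambda>n. f n + g n) \<le> trunc_norm L f + trunc_norm L g"
  unfolding trunc_norm_def by (simp add: distrib_left L2_set_triangle_ineq)

lemma trunc_norm_scale: "0 \<le> c \<Longrightarrow> trunc_norm L (\<lambda>n. c * f n) = c * trunc_norm L f"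
  unfolding trunc_norm_def by (simp add: L2_set_right_distrib mult.left_commute)

lemma L2_set_le_trunc_norm: "L2_set f {1..nat \<lfloor>L\<rfloor>} \<le> trunc_norm L f"
proof -
  have "L2_set f {1..nat \<lfloor>L\<rfloor>} = L2_set (\<lambda>n. sqrt (trunc_weight L n) * f n) {1..nat \<lfloor>L\<rfloor>}"
  proof (rule L2_set_cong)
    fix n assume "n \<in> {1..nat \<lfloor>L\<rfloor>}"
    then have "real n \<le> L" by auto linarith
    then show "f n = sqrt (trunc_weight L n) * f n" by (simp add: trunc_weight_def)
  qed simp
  also have "\<dots> \<le> trunc_norm L f"
    unfolding trunc_norm_def by (rule L2_set_mono_subset) auto
  finally show ?thesis .
qed

lemma trunc_norm_le_L2_set: "trunc_norm L f \<le> L2_set f {1..nat \<lfloor>L\<rfloor> + 1}"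
  unfolding trunc_norm_def L2_set_def
proof (intro real_sqrt_le_mono sum_mono)
  fix n
  show "(sqrt (trunc_weight L n) * f n)\<^sup>2 \<le> (f n)\<^sup>2"
    by (simp add: power_mult_distrib trunc_weight_nonneg trunc_weight_le_1 mult_left_le_one_le)
qed

lemma L2_set_le_normL:
  assumes "1 \<le> L" "k \<le> nat \<lfloor>L\<rfloor>"
  shows "L2_set (\<lambda>j. norm (u (int j))) {1..k} \<le> normL u L"
proof -
  have "L2_set (\<lambda>j. norm (u (int j))) {1..k} \<le> L2_set (\<lambda>j. norm (u (int j))) {1..nat \<lfloor>L\<rfloor>}"
    by (rule L2_set_mono_subset) (use assms(2) in auto)
  also have "\<dots> \<le> normL u L"
    unfolding normL_eq_trunc_norm[OF assms(1)] by (rule L2_set_le_trunc_norm)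
  finally show ?thesis .
qed

lemma normL_defect_le:
  assumes "1 \<le> L"
  shows "\<bar>normL v L - cmod c * normL u L\<bar> \<le> normL (\<lambda>n. v n - c *s u n) L"
proof -
  define f g h where "f n = norm (v (int n))" and "g n = norm (u (int n))"
    and "h n = norm (v (int n) - c *s u (int n))" for n
  have v_le: "f n \<le> h n + cmod c * g n" and cu_le: "cmod c * g n \<le> h n + f n" for n
    using norm_triangle_sub[of "v (int n)" "c *s u (int n)"] norm_triangle_sub[of "c *s u (int n)" "v (int n)"]
    unfolding f_def g_def h_def by (simp_all add: norm_vector_scalar_mult norm_minus_commute add.commute)
  have "normL v L \<le> trunc_norm L (\<lambda>n. h n + cmod c * g n)"
    unfolding normL_eq_trunc_norm[OF assms]
    by (rule trunc_norm_mono) (use v_le in \<open>simp_all add: f_def\<close>)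
  also have "\<dots> \<le> normL (\<lambda>n. v n - c *s u n) L + cmod c * normL u L"
    unfolding normL_eq_trunc_norm[OF assms] h_def g_def
    by (rule order_trans[OF trunc_norm_add_le]) (simp add: trunc_norm_scale)
  finally have upper: "normL v L - cmod c * normL u L \<le> normL (\<lambda>n. v n - c *s u n) L"
    by simp
  have "cmod c * normL u L = trunc_norm L (\<lambda>n. cmod c * g n)"
    unfolding normL_eq_trunc_norm[OF assms] g_def by (simp add: trunc_norm_scale)
  also have "\<dots> \<le> trunc_norm L (\<lambda>n. h n + f n)"
    by (rule trunc_norm_mono) (use cu_le in \<open>simp_all add: g_def\<close>)
  also have "\<dots> \<le> normL (\<lambda>n. v n - c *s u n) L + normL v L"
    unfolding normL_eq_trunc_norm[OF assms] h_def f_def by (rule trunc_norm_add_le)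
  finally show ?thesis using upper by linarith
qed

section \<open>Solutions of the eigenvalue equation\<close>

lemma solves_iff:
  "solves V z u \<longleftrightarrow> (\<forall>n.
     u (n + 1)$1 + u (n - 1)$1 + V n$1$1 * u n$1 + V n$1$2 * u n$2 = z * u n$1 \<and>
     V n$2$1 * u n$1 + V n$2$2 * u n$2 = z * u n$2)"
  unfolding solves_def Sop_def vec2_eq_iff
  by (simp add: matrix_vector_mult_2 Jmat_def add.assoc)

lemma solves_diff:
  assumes "solves V z u" "solves V z v"
  shows "solves V z (\<lambda>n. u n - v n)"
proof -
  have "Sop V (\<lambda>n. u n - v n) n = Sop V u n - Sop V v n" for n
    unfolding Sop_def by (simp add: matrix_vector_mult_diff_distrib)
  then show ?thesis
    using assms unfolding solves_def by (simp add: vector_ssub_ldistrib)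
qed

lemma solves_scale:
  assumes "solves V z u"
  shows "solves V z (\<lambda>n. c *s u n)"
proof -
  have "Sop V (\<lambda>n. c *s u n) n = c *s Sop V u n" for n
    unfolding Sop_def by (simp add: vector_scalar_commute vector_add_ldistrib)
  then show ?thesis
    using assms unfolding solves_def by (simp add: vector_smult_assoc mult.commute)
qed

definition effective_potential :: "(int \<Rightarrow> complex^2^2) \<Rightarrow> complex \<Rightarrow> int \<Rightarrow> complex" where
  "effective_potential V z n = V n$1$1 + V n$1$2 * V n$2$1 / (z - V n$2$2)"

definition coeff_shift :: "(int \<Rightarrow> complex^2^2) \<Rightarrow> real \<Rightarrow> real \<Rightarrow> int \<Rightarrow> complex" where
  "coeff_shift V E \<epsilon> n = (Complex E \<epsilon> - effective_potential V (Complex E \<epsilon>) n)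
    - (complex_of_real E - effective_potential V (complex_of_real E) n)"

definition lower_weight :: "(int \<Rightarrow> complex^2^2) \<Rightarrow> complex \<Rightarrow> int \<Rightarrow> real" where
  "lower_weight V z n = 1 + (cmod (V n$2$1))\<^sup>2 / (cmod (z - V n$2$2))\<^sup>2"

lemma coeff_shift_eq:
  assumes "complex_of_real E \<noteq> V n$2$2" "Complex E \<epsilon> \<noteq> V n$2$2"
  shows "coeff_shift V E \<epsilon> n = (Complex E \<epsilon> - complex_of_real E)
    * (1 + V n$1$2 * V n$2$1 / ((Complex E \<epsilon> - V n$2$2) * (complex_of_real E - V n$2$2)))"
proof -
  define z x d where "z = Complex E \<epsilon>" and "x = complex_of_real E" and "d = V n$2$2"
  define P where "P = V n$1$2 * V n$2$1"
  have "coeff_shift V E \<epsilon> n = (z - x) - P * (1 / (z - d) - 1 / (x - d))"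
    unfolding coeff_shift_def effective_potential_def z_def x_def d_def P_def
    by (simp add: algebra_simps)
  also have "1 / (z - d) - 1 / (x - d) = - (z - x) / ((z - d) * (x - d))"
    using assms unfolding z_def x_def d_def by (simp add: field_simps)
  also have "(z - x) - P * (- (z - x) / D) = (z - x) * (1 + P / D)" for D
    by (simp add: algebra_simps add_divide_distrib[symmetric])
  finally show ?thesis unfolding z_def x_def d_def P_def .
qed

lemma lower_weight_ge_1: "1 \<le> lower_weight V z n"
  by (simp add: lower_weight_def)

lemma solution_lower_eq:
  assumes "solves V z u" "z \<noteq> V n$2$2"
  shows "u n$2 = V n$2$1 * u n$1 / (z - V n$2$2)"
proof -
  have "u n$2 * (z - V n$2$2) = V n$2$1 * u n$1"
    using assms(1) unfolding solves_iff by (auto simp: algebra_simps)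
  then show ?thesis using assms(2) by (simp add: field_simps)
qed

lemma solution_norm_sq:
  assumes "solves V z u" "z \<noteq> V n$2$2"
  shows "(norm (u n))\<^sup>2 = lower_weight V z n * (cmod (u n$1))\<^sup>2"
  using assms
  by (simp add: norm_vec2_sq solution_lower_eq[OF assms] lower_weight_def norm_mult norm_divide
      power_mult_distrib power_divide algebra_simps)

lemma solution_norm_eq:
  assumes "solves V z u" "z \<noteq> V n$2$2"
  shows "norm (u n) = sqrt (lower_weight V z n) * cmod (u n$1)"
proof -
  have "norm (u n) = sqrt ((norm (u n))\<^sup>2)" by simp
  also have "\<dots> = sqrt (lower_weight V z n) * cmod (u n$1)"
    unfolding solution_norm_sq[OF assms] by (simp add: real_sqrt_mult)
  finally show ?thesis .
qed

lemma solution_upper_recurrence: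
  assumes "solves V z u" "z \<noteq> V n$2$2"
  shows "u (n + 1)$1 = (z - effective_potential V z n) * u n$1 - u (n - 1)$1"
proof -
  have "u (n + 1)$1 + u (n - 1)$1 + V n$1$1 * u n$1 + V n$1$2 * u n$2 = z * u n$1"
    using assms(1) unfolding solves_iff by auto
  then show ?thesis
    unfolding solution_lower_eq[OF assms] effective_potential_def by (simp add: algebra_simps)
qed

lemma solution_upper_recurrence_nat:
  assumes "solves V z u" "\<And>n. z \<noteq> V n$2$2"
  shows "u (int (Suc (Suc k)))$1
    = (z - effective_potential V z (int (Suc k))) * u (int (Suc k))$1 - u (int k)$1"
  using solution_upper_recurrence[OF assms(1) assms(2), of "int (Suc k)"]
  by (simp add: add.commute)

lemma solution_exists:
  assumes "\<And>n. z \<noteq> V n$2$2"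
  shows "\<exists>u. solves V z u \<and> u 0$1 = a0 \<and> u 1$1 = a1"
proof -
  obtain a where a: "a 0 = a0" "a 1 = a1"
    and rec: "\<And>n. a (n + 1) = (z - effective_potential V z n) * a n - a (n - 1)"
    using two_sided_recurrence_exists[where c = "\<lambda>n. z - effective_potential V z n"] by blast
  define u where "u n = (vector [a n, V n$2$1 * a n / (z - V n$2$2)] :: complex^2)" for n
  have u: "u n$1 = a n" "u n$2 = V n$2$1 * a n / (z - V n$2$2)" for n
    unfolding u_def by simp_all
  have "solves V z u"
    unfolding solves_iff
  proof (intro allI conjI)
    fix n
    have "z - V n$2$2 \<noteq> 0" using assms[of n] by simp
    then show "u (n + 1)$1 + u (n - 1)$1 + V n$1$1 * u n$1 + V n$1$2 * u n$2 = z * u n$1"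
      using rec[of n] unfolding u effective_potential_def by (simp add: field_simps)
    show "V n$2$1 * u n$1 + V n$2$2 * u n$2 = z * u n$2"
      using \<open>z - V n$2$2 \<noteq> 0\<close> unfolding u by (simp add: field_simps)
  qed
  then show ?thesis using a u by auto
qed

lemma solution_eq_0:
  assumes "\<And>n. z \<noteq> V n$2$2" "solves V z u" "u 0$1 = 0" "u 1$1 = 0"
  shows "u n = 0"
proof -
  have "u n$1 = 0" for n
    by (rule two_sided_recurrence_zero[where c = "\<lambda>n. z - effective_potential V z n"])
      (use assms solution_upper_recurrence[OF assms(2) assms(1)] in auto)
  then show ?thesis
    using solution_lower_eq[OF assms(2) assms(1)] by (simp add: vec2_eq_iff)
qed

section \<open>Green's identity and the Weyl solution\<close>

locale self_adjoint_potential =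
  fixes V :: "int \<Rightarrow> complex^2^2"
  assumes self_adjoint: "\<And>n. self_adjoint_mat (V n)"
begin

lemma cnj_V11: "cnj (V n$1$1) = V n$1$1"
  and cnj_V22: "cnj (V n$2$2) = V n$2$2"
  and V12_eq_cnj_V21: "V n$1$2 = cnj (V n$2$1)"
  using self_adjoint[of n] unfolding self_adjoint_mat_def by metis+

lemma V22_eq_of_real: "V n$2$2 = of_real (Re (V n$2$2))"
  using cnj_V22[of n] by (metis Reals_cnj_iff complex_is_Real_iff of_real_Re)

lemma nonreal_ne_V22: "Im z \<noteq> 0 \<Longrightarrow> z \<noteq> V n$2$2"
  using V22_eq_of_real[of n] by (metis Im_complex_of_real)

lemma green_identity_step:
  assumes "solves V z u"
  shows "Im (u (n + 1)$1 * cnj (u n$1)) - Im (u n$1 * cnj (u (n - 1)$1)) = Im z * (norm (u n))\<^sup>2"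
proof -
  define a b where "a = u n$1" and "b = u n$2"
  define a' a'' where "a' = u (n + 1)$1" and "a'' = u (n - 1)$1"
  define Q where "Q = V n$1$1 * a * cnj a + V n$1$2 * b * cnj a + V n$2$1 * a * cnj b + V n$2$2 * b * cnj b"
  have "a' + a'' + V n$1$1 * a + V n$1$2 * b = z * a" "V n$2$1 * a + V n$2$2 * b = z * b"
    using assms unfolding solves_iff a_def b_def a'_def a''_def by auto
  then have "(a' + a'' + V n$1$1 * a + V n$1$2 * b) * cnj a + (V n$2$1 * a + V n$2$2 * b) * cnj b
      = z * (a * cnj a + b * cnj b)"
    by (simp add: algebra_simps)
  also have "a * cnj a + b * cnj b = of_real ((norm (u n))\<^sup>2)"
    unfolding norm_vec2_sq a_def b_def of_real_add complex_norm_square ..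
  finally have eq: "a' * cnj a + a'' * cnj a + Q = z * of_real ((norm (u n))\<^sup>2)"
    unfolding Q_def by (simp add: algebra_simps)
  have ImQ: "Im Q = 0"
  proof -
    have "cnj Q = Q"
      unfolding Q_def using cnj_V11[of n] cnj_V22[of n] V12_eq_cnj_V21[of n]
      by (simp add: algebra_simps)
    then show ?thesis by (metis Reals_cnj_iff complex_is_Real_iff)
  qed
  have "Im (a' * cnj a) + Im (a'' * cnj a) = Im z * (norm (u n))\<^sup>2"
    using arg_cong[OF eq, of Im] ImQ by simp
  then show ?thesis
    unfolding a_def a'_def a''_def by (simp add: algebra_simps)
qed

lemma green_identity:
  assumes "solves V z u"
  shows "Im z * (\<Sum>n=1..N. (norm (u (int n)))\<^sup>2)
    = Im (u (int N + 1)$1 * cnj (u (int N)$1)) - Im (u 1$1 * cnj (u 0$1))"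
proof (induction N)
  case (Suc N)
  have "Im (u (int N + 1 + 1)$1 * cnj (u (int N + 1)$1))
      - Im (u (int N + 1)$1 * cnj (u (int N + 1 - 1)$1)) = Im z * (norm (u (int N + 1)))\<^sup>2"
    by (rule green_identity_step[OF assms])
  then show ?case using Suc by (simp add: algebra_simps)
qed simp

lemma l2_solution_green_bound:
  assumes "solves V z u" "0 < Im z" and l2: "summable (\<lambda>k::nat. (norm (u (int k)))\<^sup>2)"
  shows "Im z * (\<Sum>n=1..N. (norm (u (int n)))\<^sup>2) \<le> - Im (u 1$1 * cnj (u 0$1))"
proof -
  define boundary where "boundary M = Im (u (int M + 1)$1 * cnj (u (int M)$1))" for M
  have "(\<lambda>k. norm (u (int k))) \<longlonglongrightarrow> 0"
    using tendsto_real_sqrt[OF summable_LIMSEQ_zero[OF l2]] by simp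
  then have a_lim: "(\<lambda>k. u (int k)$1) \<longlonglongrightarrow> 0"
    by (rule Lim_null_comparison[rotated]) (simp add: Finite_Cartesian_Product.norm_nth_le)
  have "(\<lambda>M. u (int (Suc M))$1 * cnj (u (int M)$1)) \<longlonglongrightarrow> 0 * cnj 0"
    by (intro tendsto_intros a_lim LIMSEQ_Suc[OF a_lim])
  then have "boundary \<longlonglongrightarrow> 0"
    unfolding boundary_def using tendsto_Im by (fastforce simp: add.commute)
  moreover have "Im z * (\<Sum>n=1..N. (norm (u (int n)))\<^sup>2) \<le> boundary M - Im (u 1$1 * cnj (u 0$1))"
    if "N \<le> M" for M
  proof -
    have "(\<Sum>n=1..N. (norm (u (int n)))\<^sup>2) \<le> (\<Sum>n=1..M. (norm (u (int n)))\<^sup>2)"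
      by (rule sum_mono2) (use that in auto)
    then have "Im z * (\<Sum>n=1..N. (norm (u (int n)))\<^sup>2) \<le> Im z * (\<Sum>n=1..M. (norm (u (int n)))\<^sup>2)"
      using assms(2) by (simp add: mult_left_mono)
    also have "\<dots> = boundary M - Im (u 1$1 * cnj (u 0$1))"
      unfolding boundary_def by (rule green_identity[OF assms(1)])
    finally show ?thesis .
  qed
  ultimately show ?thesis
    by (intro LIMSEQ_le_const[where X = "\<lambda>M. boundary M - Im (u 1$1 * cnj (u 0$1))"])
      (auto intro!: tendsto_eq_intros)
qed

lemma solution_upper_nonzero:
  assumes "solves V z q" "0 < Im z" "q 0$1 = 0" "q 1$1 = 1" "1 \<le> M"
  shows "q (int M)$1 \<noteq> 0"
proof
  assume qM: "q (int M)$1 = 0"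
  then have "2 \<le> M" using assms(4,5) by (cases "M = 1") auto
  have "Im z * (\<Sum>n=1..M-1. (norm (q (int n)))\<^sup>2)
      = Im (q (int (M - 1) + 1)$1 * cnj (q (int (M - 1))$1)) - Im (q 1$1 * cnj (q 0$1))"
    by (rule green_identity[OF assms(1)])
  also have "int (M - 1) + 1 = int M" using \<open>2 \<le> M\<close> by simp
  finally have "(\<Sum>n=1..M-1. (norm (q (int n)))\<^sup>2) = 0"
    using qM assms(2,3) by simp
  moreover have "(norm (q 1))\<^sup>2 \<le> (\<Sum>n=1..M-1. (norm (q (int n)))\<^sup>2)"
    using member_le_sum[of 1 "{1..M-1}" "\<lambda>n. (norm (q (int n)))\<^sup>2"] \<open>2 \<le> M\<close> by auto
  moreover have "1 \<le> norm (q 1)"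
    using Finite_Cartesian_Product.norm_nth_le[of "q 1" 1] assms(4) by simp
  ultimately show False by (smt (verit) one_le_power)
qed

lemma weyl_disc_bounded:
  assumes "0 < Im z" "p 1$1 = 0" "q 1$1 = 1" "1 \<le> N"
    and disc: "Im z * (\<Sum>n=1..N. (norm (p (int n) - m *s q (int n)))\<^sup>2) \<le> Im m"
  shows "cmod m \<le> 1 / Im z"
proof -
  have "cmod m \<le> norm (p 1 - m *s q 1)"
    using Finite_Cartesian_Product.norm_nth_le[of "p 1 - m *s q 1" 1] assms(2,3) by simp
  then have "(cmod m)\<^sup>2 \<le> (norm (p 1 - m *s q 1))\<^sup>2" by (simp add: power_mono)
  also have "\<dots> \<le> (\<Sum>n=1..N. (norm (p (int n) - m *s q (int n)))\<^sup>2)"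
    using member_le_sum[of 1 "{1..N}" "\<lambda>n. (norm (p (int n) - m *s q (int n)))\<^sup>2"] assms(4) by simp
  finally have "Im z * (cmod m)\<^sup>2 \<le> cmod m"
    using disc abs_Im_le_cmod[of m] assms(1) by (smt (verit) mult_left_mono)
  then show ?thesis using assms(1)
    by (cases "m = 0") (auto simp: power2_eq_square field_simps)
qed

lemma weyl_point_exists:
  assumes "0 < Im z"
    and p: "solves V z p" "p 0$1 = 1" "p 1$1 = 0"
    and q: "solves V z q" "q 0$1 = 0" "q 1$1 = 1"
  shows "\<exists>m. \<forall>N. Im z * (\<Sum>n=1..N. (norm (p (int n) - m *s q (int n)))\<^sup>2) \<le> Im m"
proof -
  define S where "S N m = (\<Sum>n=1..N. (norm (p (int n) - m *s q (int n)))\<^sup>2)" for N m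
  have S_mono: "S N m \<le> S N' m" if "N \<le> N'" for N N' m
    unfolding S_def by (rule sum_mono2) (use that in auto)
  (* D N is the Weyl disc of level N + 1. *)
  define D where "D N = {m. Im z * S (Suc N) m \<le> Im m}" for N
  have D_compact: "compact (D N)" for N
  proof -
    have "closed (D N)"
      unfolding D_def S_def norm_vec2_sq vector_minus_component vector_smult_component
      by (intro closed_Collect_le continuous_intros)
    moreover have "bounded (D N)"
      using weyl_disc_bounded[where p = p and q = q and N = "Suc N", OF assms(1) p(3) q(3)]
      unfolding D_def S_def bounded_iff by auto
    ultimately show ?thesis by (simp add: compact_eq_bounded_closed)
  qed
  have D_nonempty: "D N \<noteq> {}" for N
  proof -
    have "q (int (Suc N))$1 \<noteq> 0"
      by (rule solution_upper_nonzero[OF q(1) assms(1) q(2,3)]) simp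
    define m0 where "m0 = p (int (Suc N))$1 / q (int (Suc N))$1"
    then have m0: "p (int (Suc N))$1 - m0 * q (int (Suc N))$1 = 0"
      using \<open>q (int (Suc N))$1 \<noteq> 0\<close> by simp
    have "Im z * S (Suc N) m0
      = Im ((p (int (Suc N) + 1)$1 - m0 * q (int (Suc N) + 1)$1) * cnj (p (int (Suc N))$1 - m0 * q (int (Suc N))$1))
        - Im ((p 1$1 - m0 * q 1$1) * cnj (p 0$1 - m0 * q 0$1))"
      using green_identity[OF solves_diff[OF p(1) solves_scale[OF q(1)]], where N = "Suc N"]
      unfolding S_def by simp
    also have "\<dots> = Im m0"
      unfolding m0 using p q by simp
    finally have "m0 \<in> D N"
      unfolding D_def by simp
    then show ?thesis by blast
  qed
  have Im_S_mono: "Im z * S N m \<le> Im z * S N' m" if "N \<le> N'" for N N' m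
    using S_mono[OF that] assms(1) by (simp add: mult_left_mono)
  have D_decreasing: "D N \<subseteq> D M" if "M \<le> N" for M N
  proof
    fix m assume "m \<in> D N"
    then show "m \<in> D M"
      using Im_S_mono[of "Suc M" "Suc N" m] that unfolding D_def by simp
  qed
  have "\<Inter>(range D) \<noteq> {}"
    by (rule compact_nest[OF D_compact D_nonempty D_decreasing])
  then obtain m where m: "\<And>N. m \<in> D N" by blast
  have "Im z * S N m \<le> Im m" for N
    using m[of N] Im_S_mono[of N "Suc N" m] unfolding D_def by force
  then show ?thesis unfolding S_def by blast
qed

lemma weyl_solution_exists:
  assumes "0 < Im z"
  shows "\<exists>u. solves V z u \<and> u \<noteq> (\<lambda>_. 0) \<and> summable (\<lambda>k::nat. (norm (u (int k)))\<^sup>2)"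
proof -
  have nonres: "\<And>n. z \<noteq> V n$2$2" using nonreal_ne_V22 assms by simp
  obtain p where p: "solves V z p" "p 0$1 = 1" "p 1$1 = 0"
    using solution_exists[where V = V, OF nonres] by blast
  obtain q where q: "solves V z q" "q 0$1 = 0" "q 1$1 = 1"
    using solution_exists[where V = V, OF nonres] by blast
  obtain m where m: "\<And>N. Im z * (\<Sum>n=1..N. (norm (p (int n) - m *s q (int n)))\<^sup>2) \<le> Im m"
    using weyl_point_exists[OF assms p q] by blast
  define u where "u n = p n - m *s q n" for n
  have "summable (\<lambda>k. (norm (u (int k)))\<^sup>2)"
  proof (rule summableI_nonneg_bounded)
    fix N
    have "(\<Sum>k<N. (norm (u (int k)))\<^sup>2) \<le> (\<Sum>k\<in>insert 0 {1..N}. (norm (u (int k)))\<^sup>2)"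
      by (rule sum_mono2) auto
    also have "\<dots> \<le> (norm (u 0))\<^sup>2 + Im m / Im z"
      using m[of N] assms by (simp add: u_def field_simps)
    finally show "(\<Sum>k<N. (norm (u (int k)))\<^sup>2) \<le> (norm (u 0))\<^sup>2 + Im m / Im z" .
  qed simp
  moreover have "u \<noteq> (\<lambda>_. 0)"
    using p(2) q(2) fun_cong[of u "\<lambda>_. 0" 0] unfolding u_def by auto
  moreover have "solves V z u"
    unfolding u_def by (rule solves_diff[OF p(1) solves_scale[OF q(1)]])
  ultimately show ?thesis by blast
qed

lemma uplus_spec:
  assumes "0 < Im z"
  shows "solves V z (uplus V z)" "uplus V z \<noteq> (\<lambda>_. 0)"
    "summable (\<lambda>k::nat. (norm (uplus V z (int k)))\<^sup>2)"
  using someI_ex[OF weyl_solution_exists[OF assms]] unfolding uplus_def by auto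

lemma uplus_upper_0_nonzero:
  assumes "0 < Im z"
  shows "uplus V z 0$1 \<noteq> 0"
proof
  let ?u = "uplus V z"
  assume a0: "?u 0$1 = 0"
  have "Im z * (\<Sum>n=1..1. (norm (?u (int n)))\<^sup>2) \<le> - Im (?u 1$1 * cnj (?u 0$1))"
    by (rule l2_solution_green_bound[OF uplus_spec(1)[OF assms] assms uplus_spec(3)[OF assms]])
  then have "Im z * (norm (?u 1))\<^sup>2 \<le> 0" using a0 by simp
  then have "?u 1$1 = 0"
    using assms by (simp add: mult_le_0_iff)
  then have "?u n = 0" for n
    using solution_eq_0[where V = V, OF _ uplus_spec(1)[OF assms] a0] nonreal_ne_V22 assms by simp
  then show False using uplus_spec(2)[OF assms] by auto
qed

lemma normalized_weyl_solution:
  assumes "0 < Im z"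
  obtains \<phi> where "solves V z \<phi>" "\<phi> 0$1 = 1" "\<phi> 1$1 = - mplus V z"
    "\<And>N. Im z * (\<Sum>n=1..N. (norm (\<phi> (int n)))\<^sup>2) \<le> Im (mplus V z)"
proof
  let ?u = "uplus V z"
  define \<phi> where "\<phi> n = (1 / ?u 0$1) *s ?u n" for n
  show \<phi>: "solves V z \<phi>"
    unfolding \<phi>_def by (rule solves_scale[OF uplus_spec(1)[OF assms]])
  show \<phi>0: "\<phi> 0$1 = 1"
    unfolding \<phi>_def using uplus_upper_0_nonzero[OF assms] by simp
  show \<phi>1: "\<phi> 1$1 = - mplus V z"
    unfolding \<phi>_def mplus_def by simp
  have "summable (\<lambda>k::nat. (norm (\<phi> (int k)))\<^sup>2)"
    unfolding \<phi>_def norm_vector_scalar_mult power_mult_distrib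
    by (rule summable_mult[OF uplus_spec(3)[OF assms]])
  then show "Im z * (\<Sum>n=1..N. (norm (\<phi> (int n)))\<^sup>2) \<le> Im (mplus V z)" for N
    using l2_solution_green_bound[OF \<phi> assms] \<phi>0 \<phi>1 by simp
qed

lemma lower_weight_le_twice:
  assumes "0 < \<epsilon>" "\<epsilon> \<le> cmod (complex_of_real E - V n$2$2)"
  shows "lower_weight V (complex_of_real E) n \<le> 2 * lower_weight V (Complex E \<epsilon>) n"
proof -
  define d where "d = Re (V n$2$2)"
  define c where "c = (cmod (V n$2$1))\<^sup>2"
  have V22: "V n$2$2 = complex_of_real d" unfolding d_def by (rule V22_eq_of_real)
  have dist_E: "(cmod (complex_of_real E - V n$2$2))\<^sup>2 = (E - d)\<^sup>2"
    unfolding V22 by (simp flip: of_real_diff)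
  have dist_z: "(cmod (Complex E \<epsilon> - V n$2$2))\<^sup>2 = (E - d)\<^sup>2 + \<epsilon>\<^sup>2"
    unfolding V22 by (simp add: cmod_def)
  have "\<epsilon>\<^sup>2 \<le> (E - d)\<^sup>2"
    using assms power_mono[of \<epsilon> "cmod (complex_of_real E - V n$2$2)" 2] dist_E by simp
  have "0 < cmod (complex_of_real E - V n$2$2)" using assms by linarith
  then have "0 < (E - d)\<^sup>2" unfolding dist_E[symmetric] by simp
  then have "c / (E - d)\<^sup>2 = (2 * c) / (2 * (E - d)\<^sup>2)"
    by simp
  also have "\<dots> \<le> (2 * c) / ((E - d)\<^sup>2 + \<epsilon>\<^sup>2)"
  proof (rule divide_left_mono)
    show "(E - d)\<^sup>2 + \<epsilon>\<^sup>2 \<le> 2 * (E - d)\<^sup>2" using \<open>\<epsilon>\<^sup>2 \<le> (E - d)\<^sup>2\<close> by simp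
    show "0 < 2 * (E - d)\<^sup>2 * ((E - d)\<^sup>2 + \<epsilon>\<^sup>2)"
      using \<open>0 < (E - d)\<^sup>2\<close> by (simp add: add_pos_nonneg)
  qed (simp add: c_def)
  then show ?thesis
    unfolding lower_weight_def dist_E dist_z c_def by simp
qed

lemma coeff_shift_bound:
  assumes "complex_of_real E \<noteq> V n$2$2"
  shows "cmod (coeff_shift V E \<epsilon> n) \<le> \<bar>\<epsilon>\<bar> * lower_weight V (complex_of_real E) n"
proof -
  define z x d where "z = Complex E \<epsilon>" and "x = complex_of_real E" and "d = V n$2$2"
  define P where "P = V n$1$2 * V n$2$1"
  have x_ne: "x \<noteq> d" using assms unfolding x_def d_def by simp
  have closer: "cmod (x - d) \<le> cmod (z - d)"
  proof -
    obtain r where r: "d = complex_of_real r"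
      using V22_eq_of_real[of n] unfolding d_def by blast
    have "cmod (x - d) = \<bar>Re (z - d)\<bar>"
      unfolding x_def z_def r by (simp flip: of_real_diff)
    then show ?thesis using abs_Re_le_cmod[of "z - d"] by simp
  qed
  then have z_ne: "z \<noteq> d" using x_ne by auto
  have "cmod (1 + P / ((z - d) * (x - d))) \<le> 1 + cmod P / (cmod (z - d) * cmod (x - d))"
    using norm_triangle_ineq[of 1 "P / ((z - d) * (x - d))"] by (simp add: norm_divide norm_mult)
  also have "\<dots> \<le> 1 + cmod P / (cmod (x - d) * cmod (x - d))"
    using closer x_ne z_ne by (intro add_left_mono divide_left_mono mult_right_mono) auto
  also have "cmod P = (cmod (V n$2$1))\<^sup>2"
    unfolding P_def V12_eq_cnj_V21 by (simp add: norm_mult power2_eq_square)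
  finally have "cmod (1 + P / ((z - d) * (x - d))) \<le> lower_weight V x n"
    unfolding lower_weight_def d_def by (simp add: power2_eq_square)
  moreover have "cmod (z - x) = \<bar>\<epsilon>\<bar>"
    unfolding z_def x_def by (simp add: cmod_def complex_eq_iff)
  ultimately show ?thesis
    using coeff_shift_eq[where V = V and n = n and E = E and \<epsilon> = \<epsilon>] x_ne z_ne unfolding x_def z_def d_def P_def
    by (simp add: norm_mult mult_left_mono)
qed
end

section \<open>Fundamental solutions at an energy in the gap\<close>

locale gap_energy = self_adjoint_potential +
  fixes E \<delta> :: real
  assumes gap_pos: "0 < \<delta>" and gap: "\<And>n. \<delta> \<le> cmod (complex_of_real E - V n$2$2)"
begin

lemma E_ne_V22: "complex_of_real E \<noteq> V n$2$2"
  using gap[of n] gap_pos by auto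

lemma u1_spec: "solves V E (u1 V E)" "u1 V E 1$1 = 1" "u1 V E 0$1 = 0"
proof -
  obtain u where "solves V E u" "u 0$1 = 0" "u 1$1 = 1"
    using solution_exists[where V = V, OF E_ne_V22] by blast
  then have "\<exists>u. solves V E u \<and> u 1$1 = 1 \<and> u 0$1 = 0" by blast
  from someI_ex[OF this] show "solves V E (u1 V E)" "u1 V E 1$1 = 1" "u1 V E 0$1 = 0"
    unfolding u1_def by auto
qed

lemma u2_spec: "solves V E (u2 V E)" "u2 V E 1$1 = 0" "u2 V E 0$1 = 1"
proof -
  obtain u where "solves V E u" "u 0$1 = 1" "u 1$1 = 0"
    using solution_exists[where V = V, OF E_ne_V22] by blast
  then have "\<exists>u. solves V E u \<and> u 1$1 = 0 \<and> u 0$1 = 1" by blast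
  from someI_ex[OF this] show "solves V E (u2 V E)" "u2 V E 1$1 = 0" "u2 V E 0$1 = 1"
    unfolding u2_def by auto
qed

lemma wronskian_u1_u2:
  "u1 V E (int (Suc k))$1 * u2 V E (int k)$1 - u1 V E (int k)$1 * u2 V E (int (Suc k))$1 = 1"
proof (induction k)
  case (Suc k)
  show ?case
    unfolding solution_upper_recurrence_nat[OF u1_spec(1) E_ne_V22]
      solution_upper_recurrence_nat[OF u2_spec(1) E_ne_V22]
    using Suc.IH by (simp add: algebra_simps)
qed (simp add: u1_spec u2_spec)

lemma normL_u1_pos: "1 \<le> L \<Longrightarrow> 0 < normL (u1 V E) L"
proof -
  assume "1 \<le> L"
  have "1 \<le> norm (u1 V E 1)"
    using Finite_Cartesian_Product.norm_nth_le[of "u1 V E 1" 1] u1_spec(2) by simp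
  also have "norm (u1 V E 1) = normL (u1 V E) 1"
    using normL_of_nat[of 1 "u1 V E"] by simp
  also have "\<dots> \<le> normL (u1 V E) L"
    by (rule normL_mono) (use \<open>1 \<le> L\<close> in auto)
  finally show ?thesis by simp
qed

lemma normL_u2_1: "normL (u2 V E) 1 = 0"
proof -
  have "u2 V E 1 = 0"
    using solution_lower_eq[OF u2_spec(1) E_ne_V22, of 1] u2_spec(2) by (simp add: vec2_eq_iff)
  then show ?thesis by (simp add: normL_def)
qed

lemma normL_u2_pos: "1 < L \<Longrightarrow> 0 < normL (u2 V E) L"
proof -
  assume "1 < L"
  have "u2 V E 2$1 = -1"
    using solution_upper_recurrence_nat[OF u2_spec(1) E_ne_V22, of 0] u2_spec by simp
  then have "u2 V E (\<lfloor>1::real\<rfloor> + 1) \<noteq> 0" by auto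
  then show ?thesis
    using normL_strict_mono[of 1 L "u2 V E"] normL_u2_1 \<open>1 < L\<close> by simp
qed

lemma normL_product_strict_mono:
  assumes "1 \<le> L" "L < L'"
  shows "normL (u1 V E) L * normL (u2 V E) L < normL (u1 V E) L' * normL (u2 V E) L'"
proof -
  define K where "K = nat \<lfloor>L\<rfloor>"
  have K: "\<lfloor>L\<rfloor> + 1 = int (Suc K)" using assms(1) unfolding K_def by simp
  have "u1 V E (\<lfloor>L\<rfloor> + 1) \<noteq> 0 \<or> u2 V E (\<lfloor>L\<rfloor> + 1) \<noteq> 0"
    using wronskian_u1_u2[of K] unfolding K by auto
  moreover have "normL (u1 V E) L \<le> normL (u1 V E) L'" "normL (u2 V E) L \<le> normL (u2 V E) L'"
    using assms by (simp_all add: normL_mono)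
  moreover have "0 < normL (u1 V E) L" "0 < normL (u2 V E) L'"
    using assms normL_u1_pos normL_u2_pos by auto
  ultimately consider
      "normL (u1 V E) L < normL (u1 V E) L'" "normL (u2 V E) L \<le> normL (u2 V E) L'"
    | "normL (u1 V E) L \<le> normL (u1 V E) L'" "normL (u2 V E) L < normL (u2 V E) L'"
    using normL_strict_mono[OF assms] by blast
  then show ?thesis
  proof cases
    case 1
    have "normL (u1 V E) L * normL (u2 V E) L \<le> normL (u1 V E) L * normL (u2 V E) L'"
      using 1 normL_nonneg by (intro mult_left_mono)
    also have "\<dots> < normL (u1 V E) L' * normL (u2 V E) L'"
      using 1 \<open>0 < normL (u2 V E) L'\<close> by (intro mult_strict_right_mono)
    finally show ?thesis .
  next
    case 2
    have "normL (u1 V E) L * normL (u2 V E) L < normL (u1 V E) L * normL (u2 V E) L'"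
      using 2 \<open>0 < normL (u1 V E) L\<close> by (intro mult_strict_left_mono)
    also have "\<dots> \<le> normL (u1 V E) L' * normL (u2 V E) L'"
      using 2 normL_nonneg by (intro mult_right_mono)
    finally show ?thesis .
  qed
qed

lemma normL_product_growth:
  "1 \<le> M \<Longrightarrow> real M - 1 \<le> 2 * (normL (u1 V E) (real M) * normL (u2 V E) (real M))"
  unfolding normL_of_nat
  by (rule wronskian_L2_lower_bound[where \<alpha> = "\<lambda>n. u1 V E (int n)$1" and \<beta> = "\<lambda>n. u2 V E (int n)$1"])
    (auto simp: Finite_Cartesian_Product.norm_nth_le wronskian_u1_u2[unfolded of_nat_Suc])

lemma Leps_spec:
  assumes "0 < \<epsilon>"
  shows "1 < Leps V E \<epsilon>"
    and "normL (u1 V E) (Leps V E \<epsilon>) * normL (u2 V E) (Leps V E \<epsilon>) = 1 / (4 * \<epsilon>)"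
proof -
  define y where "y = 1 / (4 * \<epsilon>)"
  have "\<exists>!L. 1 < L \<and> normL (u1 V E) L * normL (u2 V E) L = y"
  proof (rule ex_ex1I)
    define M where "M = nat \<lceil>2 * y\<rceil> + 2"
    have "y \<le> normL (u1 V E) (real M) * normL (u2 V E) (real M)"
      using normL_product_growth[of M] unfolding M_def by linarith
    moreover have "normL (u1 V E) 1 * normL (u2 V E) 1 \<le> y"
      using normL_u2_1 assms unfolding y_def by simp
    moreover have "1 \<le> real M" unfolding M_def by simp
    ultimately obtain L where L: "1 \<le> L" "L \<le> real M" "normL (u1 V E) L * normL (u2 V E) L = y"
      using IVT'[of "\<lambda>L. normL (u1 V E) L * normL (u2 V E) L" 1 y "real M"]
        continuous_on_mult[OF continuous_on_normL[of M] continuous_on_normL[of M]]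
      by blast
    moreover have "L \<noteq> 1"
      using L(3) normL_u2_1 assms unfolding y_def by auto
    ultimately show "\<exists>L. 1 < L \<and> normL (u1 V E) L * normL (u2 V E) L = y" by force
  next
    fix L L' assume "1 < L \<and> normL (u1 V E) L * normL (u2 V E) L = y"
      "1 < L' \<and> normL (u1 V E) L' * normL (u2 V E) L' = y"
    then show "L = L'"
      using normL_product_strict_mono[of L L'] normL_product_strict_mono[of L' L]
      by (cases L L' rule: linorder_cases) auto
  qed
  from theI'[OF this] show "1 < Leps V E \<epsilon>"
    and "normL (u1 V E) (Leps V E \<epsilon>) * normL (u2 V E) (Leps V E \<epsilon>) = 1 / (4 * \<epsilon>)"
    unfolding Leps_def y_def by auto
qed

section \<open>Comparison with the Weyl solution near the real axis\<close>

lemma upper_weighted_le_twice_norm: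
  assumes "0 < \<epsilon>" "\<epsilon> < \<delta>" "solves V (Complex E \<epsilon>) \<phi>"
  shows "sqrt (lower_weight V E n) * cmod (\<phi> n$1) \<le> 2 * norm (\<phi> n)"
proof -
  have "lower_weight V E n \<le> 2\<^sup>2 * lower_weight V (Complex E \<epsilon>) n"
    using lower_weight_le_twice[of \<epsilon> E n] gap[of n] assms lower_weight_ge_1[of V "Complex E \<epsilon>" n]
    by simp
  then have sqrt_le: "sqrt (lower_weight V E n) \<le> 2 * sqrt (lower_weight V (Complex E \<epsilon>) n)"
    using real_sqrt_le_mono by (fastforce simp: real_sqrt_mult)
  have "sqrt (lower_weight V E n) * cmod (\<phi> n$1)
      \<le> 2 * (sqrt (lower_weight V (Complex E \<epsilon>) n) * cmod (\<phi> n$1))"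
    using mult_right_mono[OF sqrt_le norm_ge_zero[of "\<phi> n$1"]] by (simp add: mult.assoc)
  also have "\<dots> = 2 * norm (\<phi> n)"
    using solution_norm_eq[OF assms(3) nonreal_ne_V22] assms(1) by simp
  finally show ?thesis .
qed

lemma perturbation_term_bound:
  assumes "0 < \<epsilon>" "\<epsilon> < \<delta>" "solves V E u" "solves V (Complex E \<epsilon>) \<phi>"
  shows "cmod (u n$1 * coeff_shift V E \<epsilon> n * \<phi> n$1) \<le> 2 * \<epsilon> * norm (u n) * norm (\<phi> n)"
proof -
  define g where "g = coeff_shift V E \<epsilon> n"
  define w where "w = lower_weight V E n"
  have w: "w = sqrt w * sqrt w" using lower_weight_ge_1[of V E n] unfolding w_def by simp
  have "cmod (u n$1 * g * \<phi> n$1) = cmod (u n$1) * cmod g * cmod (\<phi> n$1)"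
    by (simp add: norm_mult)
  also have "\<dots> \<le> cmod (u n$1) * (\<epsilon> * w) * cmod (\<phi> n$1)"
    using coeff_shift_bound[OF E_ne_V22, of \<epsilon>] assms(1)
    unfolding g_def w_def by (intro mult_right_mono mult_left_mono) auto
  also have "\<dots> = \<epsilon> * (sqrt w * cmod (u n$1)) * (sqrt w * cmod (\<phi> n$1))"
    by (subst w) (simp add: algebra_simps)
  also have "\<dots> \<le> \<epsilon> * norm (u n) * (2 * norm (\<phi> n))"
  proof -
    have "sqrt w * cmod (u n$1) = norm (u n)"
      using solution_norm_eq[OF assms(3) E_ne_V22, of n] unfolding w_def by simp
    moreover have "sqrt w * cmod (\<phi> n$1) \<le> 2 * norm (\<phi> n)"
      using upper_weighted_le_twice_norm[OF assms(1,2,4)] unfolding w_def .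
    ultimately show ?thesis
      using assms(1) by (simp add: mult_left_mono)
  qed
  finally show ?thesis unfolding g_def by simp
qed

lemma duhamel_formula:
  assumes "0 < \<epsilon>" "solves V (Complex E \<epsilon>) \<phi>" "\<phi> 0$1 = 1" "\<phi> 1$1 = - m"
  shows "\<phi> (int (Suc k))$1 - (u2 V E (int (Suc k))$1 - m * u1 V E (int (Suc k))$1)
    = u1 V E (int (Suc k))$1 * (\<Sum>j=1..k. u2 V E (int j)$1 * (coeff_shift V E \<epsilon> (int j) * \<phi> (int j)$1))
    - u2 V E (int (Suc k))$1 * (\<Sum>j=1..k. u1 V E (int j)$1 * (coeff_shift V E \<epsilon> (int j) * \<phi> (int j)$1))"
proof (rule variation_of_constants[where \<alpha> = "\<lambda>k. u1 V E (int k)$1" and \<beta> = "\<lambda>k. u2 V E (int k)$1"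
      and \<phi> = "\<lambda>k. \<phi> (int k)$1" and f = "\<lambda>j. coeff_shift V E \<epsilon> (int j) * \<phi> (int j)$1"
      and T = "\<lambda>k. complex_of_real E - effective_potential V E (int (Suc k))"])
  show "u1 V E (int (Suc k))$1 * u2 V E (int k)$1 - u1 V E (int k)$1 * u2 V E (int (Suc k))$1 = 1" for k
    by (rule wronskian_u1_u2)
  show "u1 V E (int (Suc (Suc k)))$1
      = (complex_of_real E - effective_potential V E (int (Suc k))) * u1 V E (int (Suc k))$1 - u1 V E (int k)$1"
    "u2 V E (int (Suc (Suc k)))$1
      = (complex_of_real E - effective_potential V E (int (Suc k))) * u2 V E (int (Suc k))$1 - u2 V E (int k)$1"
    for k
    by (rule solution_upper_recurrence_nat[OF u1_spec(1) E_ne_V22]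
        solution_upper_recurrence_nat[OF u2_spec(1) E_ne_V22])+
  show "\<phi> (int (Suc (Suc k)))$1
      = (complex_of_real E - effective_potential V E (int (Suc k))) * \<phi> (int (Suc k))$1 - \<phi> (int k)$1
        + coeff_shift V E \<epsilon> (int (Suc k)) * \<phi> (int (Suc k))$1" for k
    using solution_upper_recurrence_nat[OF assms(2) nonreal_ne_V22, of k] assms(1)
    unfolding coeff_shift_def by (simp add: algebra_simps)
qed (use assms u1_spec u2_spec in simp_all)

lemma duhamel_sum_bound:
  assumes "0 < \<epsilon>" "\<epsilon> < \<delta>" "solves V E u" "solves V (Complex E \<epsilon>) \<phi>"
  shows "cmod (\<Sum>j=1..k. u (int j)$1 * (coeff_shift V E \<epsilon> (int j) * \<phi> (int j)$1))
    \<le> 2 * \<epsilon> * L2_set (\<lambda>j. norm (u (int j))) {1..k} * L2_set (\<lambda>j. norm (\<phi> (int j))) {1..k}"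
proof -
  have "cmod (\<Sum>j=1..k. u (int j)$1 * (coeff_shift V E \<epsilon> (int j) * \<phi> (int j)$1))
      \<le> (\<Sum>j=1..k. 2 * \<epsilon> * (\<bar>norm (u (int j))\<bar> * \<bar>norm (\<phi> (int j))\<bar>))"
    using perturbation_term_bound[OF assms]
    by (intro order_trans[OF norm_sum] sum_mono) (simp add: mult.assoc)
  also have "\<dots> \<le> 2 * \<epsilon> * (L2_set (\<lambda>j. norm (u (int j))) {1..k} * L2_set (\<lambda>j. norm (\<phi> (int j))) {1..k})"
    unfolding sum_distrib_left[symmetric] using assms(1) by (intro mult_left_mono L2_set_mult_ineq) auto
  finally show ?thesis by (simp add: mult.assoc)
qed

lemma duhamel_pointwise_bound:
  assumes "0 < \<epsilon>" "\<epsilon> < \<delta>" "solves V (Complex E \<epsilon>) \<phi>" "\<phi> 0$1 = 1" "\<phi> 1$1 = - m"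
  shows "norm (u2 V E (int (Suc k)) - m *s u1 V E (int (Suc k)))
    \<le> 2 * norm (\<phi> (int (Suc k)))
      + 2 * \<epsilon> * (norm (u1 V E (int (Suc k))) * L2_set (\<lambda>j. norm (u2 V E (int j))) {1..k}
        + norm (u2 V E (int (Suc k))) * L2_set (\<lambda>j. norm (u1 V E (int j))) {1..k})
      * L2_set (\<lambda>j. norm (\<phi> (int j))) {1..k}"
proof -
  define n where "n = int (Suc k)"
  define w where "w = sqrt (lower_weight V E n)"
  define S1 S2 where
    "S1 = (\<Sum>j=1..k. u1 V E (int j)$1 * (coeff_shift V E \<epsilon> (int j) * \<phi> (int j)$1))" and
    "S2 = (\<Sum>j=1..k. u2 V E (int j)$1 * (coeff_shift V E \<epsilon> (int j) * \<phi> (int j)$1))"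
  define P1 P2 P where
    "P1 = L2_set (\<lambda>j. norm (u1 V E (int j))) {1..k}" and
    "P2 = L2_set (\<lambda>j. norm (u2 V E (int j))) {1..k}" and
    "P = L2_set (\<lambda>j. norm (\<phi> (int j))) {1..k}"
  have w0: "0 \<le> w" unfolding w_def using lower_weight_ge_1[of V E n] by simp
  have norm_u: "norm (u n) = w * cmod (u n$1)" if "solves V E u" for u
    unfolding w_def using solution_norm_eq[OF that E_ne_V22] .
  have "u2 V E n$1 - m * u1 V E n$1 = \<phi> n$1 - (u1 V E n$1 * S2 - u2 V E n$1 * S1)"
    using duhamel_formula[OF assms(1,3-5), of k] unfolding n_def S1_def S2_def
    by (simp add: algebra_simps)
  then have "cmod (u2 V E n$1 - m * u1 V E n$1) \<le> cmod (\<phi> n$1) + cmod (u1 V E n$1 * S2 - u2 V E n$1 * S1)"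
    by (simp add: norm_triangle_ineq4)
  also have "\<dots> \<le> cmod (\<phi> n$1) + (cmod (u1 V E n$1) * cmod S2 + cmod (u2 V E n$1) * cmod S1)"
    using norm_triangle_ineq4[of "u1 V E n$1 * S2" "u2 V E n$1 * S1"] by (simp add: norm_mult)
  finally have "w * cmod (u2 V E n$1 - m * u1 V E n$1)
      \<le> w * (cmod (\<phi> n$1) + (cmod (u1 V E n$1) * cmod S2 + cmod (u2 V E n$1) * cmod S1))"
    by (rule mult_left_mono[OF _ w0])
  also have "\<dots> = w * cmod (\<phi> n$1) + norm (u1 V E n) * cmod S2 + norm (u2 V E n) * cmod S1"
    using norm_u[OF u1_spec(1)] norm_u[OF u2_spec(1)] by (simp add: distrib_left mult.assoc)
  also have "\<dots> \<le> 2 * norm (\<phi> n) + norm (u1 V E n) * (2 * \<epsilon> * P2 * P) + norm (u2 V E n) * (2 * \<epsilon> * P1 * P)"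
    using upper_weighted_le_twice_norm[OF assms(1-3), of n]
      duhamel_sum_bound[OF assms(1,2) u1_spec(1) assms(3), of k]
      duhamel_sum_bound[OF assms(1,2) u2_spec(1) assms(3), of k]
    unfolding w_def S1_def S2_def P1_def P2_def P_def
    by (intro add_mono mult_left_mono) auto
  also have "w * cmod (u2 V E n$1 - m * u1 V E n$1) = norm (u2 V E n - m *s u1 V E n)"
    using norm_u[OF solves_diff[OF u2_spec(1) solves_scale[OF u1_spec(1)]]] by simp
  finally show ?thesis
    unfolding n_def P1_def P2_def P_def by (simp add: algebra_simps)
qed

lemma weyl_defect_pointwise_bound:
  assumes "0 < \<epsilon>" "\<epsilon> < \<delta>" "solves V (Complex E \<epsilon>) \<phi>" "\<phi> 0$1 = 1" "\<phi> 1$1 = - m"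
    and \<phi>_L2: "\<And>K. L2_set (\<lambda>j. norm (\<phi> (int j))) {1..K} \<le> R"
    and "1 \<le> L" "1 \<le> n" "n \<le> nat \<lfloor>L\<rfloor> + 1"
  shows "norm (u2 V E (int n) - m *s u1 V E (int n))
    \<le> 2 * norm (\<phi> (int n)) + 2 * \<epsilon> * R * (normL (u2 V E) L * norm (u1 V E (int n))
      + normL (u1 V E) L * norm (u2 V E (int n)))"
proof -
  obtain k where k: "n = Suc k" "k \<le> nat \<lfloor>L\<rfloor>" using assms(8,9) by (cases n) auto
  define a1 a2 where "a1 = norm (u1 V E (int n))" and "a2 = norm (u2 V E (int n))"
  have "(a1 * L2_set (\<lambda>j. norm (u2 V E (int j))) {1..k} + a2 * L2_set (\<lambda>j. norm (u1 V E (int j))) {1..k})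
      * L2_set (\<lambda>j. norm (\<phi> (int j))) {1..k}
    \<le> (a1 * normL (u2 V E) L + a2 * normL (u1 V E) L) * R" (is "?lhs \<le> ?rhs")
    using L2_set_le_normL[OF assms(7) k(2)] \<phi>_L2[of k] normL_nonneg unfolding a1_def a2_def
    by (intro mult_mono add_mono mult_left_mono add_nonneg_nonneg mult_nonneg_nonneg) auto
  then have "2 * \<epsilon> * ?lhs \<le> 2 * \<epsilon> * ?rhs"
    using assms(1) by (intro mult_left_mono) auto
  then show ?thesis
    using duhamel_pointwise_bound[OF assms(1-5), of k] unfolding k(1)[symmetric] a1_def a2_def
    by (simp add: algebra_simps)
qed

lemma normL_weyl_defect_bound:
  assumes "0 < \<epsilon>" "\<epsilon> < \<delta>"
  shows "normL (\<lambda>n. u2 V E n - mplus V (Complex E \<epsilon>) *s u1 V E n) (Leps V E \<epsilon>)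
    \<le> 3 * sqrt (cmod (mplus V (Complex E \<epsilon>)) / \<epsilon>)"
proof -
  define m L where "m = mplus V (Complex E \<epsilon>)" and "L = Leps V E \<epsilon>"
  define A B where "A = normL (u1 V E) L" and "B = normL (u2 V E) L"
  define R where "R = sqrt (cmod m / \<epsilon>)"
  have L: "1 \<le> L" and AB: "A * B = 1 / (4 * \<epsilon>)"
    using Leps_spec[OF assms(1)] unfolding L_def A_def B_def by auto
  obtain \<phi> where \<phi>: "solves V (Complex E \<epsilon>) \<phi>" "\<phi> 0$1 = 1" "\<phi> 1$1 = - m"
    and \<phi>_green: "\<And>K. \<epsilon> * (\<Sum>n=1..K. (norm (\<phi> (int n)))\<^sup>2) \<le> Im m"
    using normalized_weyl_solution[of "Complex E \<epsilon>"] assms(1) unfolding m_def by auto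
  have \<phi>_L2: "L2_set (\<lambda>n. norm (\<phi> (int n))) {1..K} \<le> R" for K
    unfolding R_def
    using \<phi>_green[of K] abs_Im_le_cmod[of m] assms(1) by (intro L2_set_le_sqrt) (simp add: field_simps)
  define c1 c2 where "c1 = 2 * \<epsilon> * R * B" and "c2 = 2 * \<epsilon> * R * A"
  (* This is where the choice of L_eps enters: 4 eps A B = 1. *)
  have c: "0 \<le> c1" "0 \<le> c2" "c1 * A + c2 * B = R"
    using AB assms(1) normL_nonneg unfolding c1_def c2_def A_def B_def R_def
    by (auto simp: algebra_simps)
  have "normL (\<lambda>n. u2 V E n - m *s u1 V E n) L
      \<le> trunc_norm L (\<lambda>n. 2 * norm (\<phi> (int n)) + c1 * norm (u1 V E (int n)) + c2 * norm (u2 V E (int n)))"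
    unfolding normL_eq_trunc_norm[OF L]
    using weyl_defect_pointwise_bound[OF assms \<phi> \<phi>_L2 L] unfolding c1_def c2_def A_def B_def
    by (intro trunc_norm_mono) (simp_all add: algebra_simps)
  also have "\<dots> \<le> trunc_norm L (\<lambda>n. 2 * norm (\<phi> (int n))) + trunc_norm L (\<lambda>n. c1 * norm (u1 V E (int n)))
      + trunc_norm L (\<lambda>n. c2 * norm (u2 V E (int n)))"
    by (intro order_trans[OF trunc_norm_add_le] add_right_mono trunc_norm_add_le)
  also have "\<dots> = 2 * trunc_norm L (\<lambda>n. norm (\<phi> (int n))) + c1 * A + c2 * B"
    unfolding A_def B_def normL_eq_trunc_norm[OF L] using c by (simp add: trunc_norm_scale)
  also have "\<dots> \<le> 2 * R + R"
    using order_trans[OF trunc_norm_le_L2_set \<phi>_L2, of L] c(3) by simp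
  finally show ?thesis unfolding m_def L_def R_def by simp
qed

lemma normL_ratio_bounds:
  assumes "0 < \<epsilon>" "\<epsilon> < \<delta>"
  defines "m \<equiv> mplus V (Complex E \<epsilon>)"
    and "A \<equiv> normL (u1 V E) (Leps V E \<epsilon>)" and "B \<equiv> normL (u2 V E) (Leps V E \<epsilon>)"
  shows "(1/64) / cmod m < A / B \<and> A / B < 64 / cmod m"
proof -
  have AB: "A * B = 1 / (4 * \<epsilon>)" and L: "1 \<le> Leps V E \<epsilon>"
    using Leps_spec[OF assms(1)] unfolding A_def B_def by auto
  then have "0 < A * B" using assms(1) by simp
  moreover have "0 \<le> A" "0 \<le> B" unfolding A_def B_def by (simp_all add: normL_nonneg)
  ultimately have "0 < A" "0 < B" by (auto simp: zero_less_mult_iff)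
  have "\<bar>B - cmod m * A\<bar> \<le> normL (\<lambda>n. u2 V E n - m *s u1 V E n) (Leps V E \<epsilon>)"
    unfolding A_def B_def by (rule normL_defect_le[OF L])
  also have "\<dots> \<le> 3 * sqrt (cmod m / \<epsilon>)"
    unfolding m_def by (rule normL_weyl_defect_bound[OF assms(1,2)])
  also have "cmod m / \<epsilon> = 2\<^sup>2 * (cmod m * A * B)"
    using AB assms(1) by (simp add: field_simps)
  finally have "\<bar>B - cmod m * A\<bar> \<le> 6 * sqrt (cmod m * A * B)"
    by (simp add: real_sqrt_mult)
  then show ?thesis
    using ratio_bounds_of_balance_defect[OF \<open>0 < A\<close> \<open>0 < B\<close>] by simp
qed

end

lemma Tdelta_gap: "E \<in> Tdelta V \<delta> \<Longrightarrow> \<delta> \<le> cmod (complex_of_real E - V n$2$2)"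
  unfolding Tdelta_def
  using infdist_le[of "V n$2$2" "range (\<lambda>n. V n$2$2)" "complex_of_real E"]
  by (simp add: dist_norm)

theorem theorem6p7:
  fixes V :: "int \<Rightarrow> complex^2^2" and \<delta> E :: real
  assumes "bounded (range V)"
    and "\<And>n. self_adjoint_mat (V n)"
    and "\<delta> > 0"
    and "E \<in> Tdelta V \<delta>"
  shows "\<exists>C1 C2. 0 < C1 \<and> C1 < C2 \<and>
    (\<forall>\<epsilon>. 0 < \<epsilon> \<and> \<epsilon> < \<delta> \<longrightarrow>
      C1 / cmod (mplus V (Complex E \<epsilon>))
        < normL (u1 V E) (Leps V E \<epsilon>) / normL (u2 V E) (Leps V E \<epsilon>) \<and>
      normL (u1 V E) (Leps V E \<epsilon>) / normL (u2 V E) (Leps V E \<epsilon>)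
        < C2 / cmod (mplus V (Complex E \<epsilon>)))"
proof -
  interpret gap_energy V E \<delta>
    using assms(2-4) Tdelta_gap by unfold_locales auto
  show ?thesis
    using normL_ratio_bounds by (intro exI[of _ "1/64"] exI[of _ 64]) auto
qed

end
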